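(* Let $\mu,\nu$ be $\sigma$-finite invariant measures on $S$ and $\gamma,\delta$ invariant kernels on $S$ such that $$\iint\mathbf 1\{(s,t)\in\cdot\}\,\gamma(s,dt)\,\mu(ds)=\iint\mathbf 1\{(s,t)\in\cdot\}\,\delta(t,ds)\,\nu(dt).$$ Let $v,w:S\to[0,\infty]$ be measurable with $0<\mu_sv<\infty$, $0<\mu_sw<\infty$ for all $s$ and $\frac{\mu_bw}{\mu_bv}=\frac{\mu_{b'}w}{\mu_{b'}v}$ for all $b,b'\in O$, and let $m:S\times S\to[0,\infty]$ be measurable and invariant. Then $$\iint\Delta_v(s,t)w(s)m(s,t)\,\gamma(s,dt)\,\mu(ds)=\iint w(t)m(s,t)\,\delta(t,ds)\,\nu(dt),$$ where $\Delta_v(s,t):=\mu_tv/\mu_sv$.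
   Context: $G$ is a locally compact second countable Hausdorff group, $\lambda$ a left Haar measure. $(S,\mathcal S)$ is a Borel space on which $G$ acts measurably and properly (there is a measurable partition $B_1,B_2,\dots$ of $S$ with $\mu_s(B_n)<\infty$ for all $s,n$), $\mu_s$ being the image of $\lambda$ under $g\mapsto gs$. $O\in\mathcal S$ is a fixed system of orbit representatives. A measure $\mu$ on $S$ is invariant if $\mu(g^{-1}B)=\mu(B)$ for all $g,B$; a $\sigma$-finite kernel $\gamma$ on $S$ is invariant if $\gamma(gs,B)=\gamma(s,g^{-1}B)$; $m$ is invariant if $m(gs,gt)=m(s,t)$. *)

theory Defs
  imports "HOL-Probability.Probability" "HOL-Algebra.Group"
begin

definition lcsc_topological_group :: "('g::{second_countable_topology,t2_space}, 'b) monoid_scheme \<Rightarrow> bool" where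
  "lcsc_topological_group G \<longleftrightarrow>
     group G \<and> carrier G = UNIV \<and>
     locally_compact_space (euclidean :: 'g topology) \<and>
     continuous_on UNIV (\<lambda>(x,y). x \<otimes>\<^bsub>G\<^esub> y) \<and>
     continuous_on UNIV (\<lambda>x. inv\<^bsub>G\<^esub> x)"

definition left_haar_measure :: "('g::{second_countable_topology,t2_space}, 'b) monoid_scheme \<Rightarrow> 'g measure \<Rightarrow> bool" where
  "left_haar_measure G lam \<longleftrightarrow>
     sets lam = sets borel \<and>
     (\<forall>K. compact K \<longrightarrow> emeasure lam K < \<infinity>) \<and>
     (\<forall>U. open U \<and> U \<noteq> {} \<longrightarrow> emeasure lam U > 0) \<and>
     (\<forall>g. \<forall>A\<in>sets borel. emeasure lam ((\<lambda>x. g \<otimes>\<^bsub>G\<^esub> x) ` A) = emeasure lam A)"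

definition borel_space :: "'s measure \<Rightarrow> bool" where
  "borel_space S \<longleftrightarrow> (\<exists>f::'s \<Rightarrow> real. f \<in> S \<rightarrow>\<^sub>M borel \<and> inj_on f (space S) \<and>
       (\<forall>A\<in>sets S. f ` A \<in> sets borel))"

definition measurable_action :: "('g::{second_countable_topology,t2_space}, 'b) monoid_scheme \<Rightarrow> 's measure \<Rightarrow> ('g \<Rightarrow> 's \<Rightarrow> 's) \<Rightarrow> bool" where
  "measurable_action G S act \<longleftrightarrow>
     (\<forall>s\<in>space S. act \<one>\<^bsub>G\<^esub> s = s) \<and>
     (\<forall>g h. \<forall>s\<in>space S. act (g \<otimes>\<^bsub>G\<^esub> h) s = act g (act h s)) \<and>
     (\<lambda>(g,s). act g s) \<in> (borel \<Otimes>\<^sub>M S) \<rightarrow>\<^sub>M S"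

definition orbit_measure :: "'g measure \<Rightarrow> 's measure \<Rightarrow> ('g \<Rightarrow> 's \<Rightarrow> 's) \<Rightarrow> 's \<Rightarrow> 's measure" where
  "orbit_measure lam S act s = distr lam S (\<lambda>g. act g s)"

definition proper_action :: "'g measure \<Rightarrow> 's measure \<Rightarrow> ('g \<Rightarrow> 's \<Rightarrow> 's) \<Rightarrow> bool" where
  "proper_action lam S act \<longleftrightarrow>
     (\<exists>B::nat \<Rightarrow> 's set. range B \<subseteq> sets S \<and> disjoint_family B \<and> (\<Union>n. B n) = space S \<and>
        (\<forall>s\<in>space S. \<forall>n. emeasure (orbit_measure lam S act s) (B n) < \<infinity>))"

definition orbit_representatives :: "'s measure \<Rightarrow> ('g \<Rightarrow> 's \<Rightarrow> 's) \<Rightarrow> 's set \<Rightarrow> bool" where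
  "orbit_representatives S act Orb \<longleftrightarrow> Orb \<in> sets S \<and>
     (\<forall>s\<in>space S. \<exists>!b. b \<in> Orb \<and> (\<exists>g. act g b = s))"

definition invariant_measure :: "'s measure \<Rightarrow> ('g \<Rightarrow> 's \<Rightarrow> 's) \<Rightarrow> 's measure \<Rightarrow> bool" where
  "invariant_measure S act mu \<longleftrightarrow> sets mu = sets S \<and>
     (\<forall>g. \<forall>B\<in>sets S. emeasure mu (act g -` B \<inter> space S) = emeasure mu B)"

definition sigma_finite_kernel :: "'s measure \<Rightarrow> ('s \<Rightarrow> 's measure) \<Rightarrow> bool" where
  "sigma_finite_kernel S \<gamma> \<longleftrightarrow>
     (\<forall>s\<in>space S. sets (\<gamma> s) = sets S) \<and>
     (\<forall>B\<in>sets S. (\<lambda>s. emeasure (\<gamma> s) B) \<in> borel_measurable S) \<and>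
     (\<exists>B::nat \<Rightarrow> 's set. range B \<subseteq> sets S \<and> disjoint_family B \<and> (\<Union>n. B n) = space S \<and>
        (\<forall>s\<in>space S. \<forall>n. emeasure (\<gamma> s) (B n) < \<infinity>))"

definition invariant_kernel :: "'s measure \<Rightarrow> ('g \<Rightarrow> 's \<Rightarrow> 's) \<Rightarrow> ('s \<Rightarrow> 's measure) \<Rightarrow> bool" where
  "invariant_kernel S act \<gamma> \<longleftrightarrow> sigma_finite_kernel S \<gamma> \<and>
     (\<forall>g. \<forall>s\<in>space S. \<forall>B\<in>sets S. emeasure (\<gamma> (act g s)) B = emeasure (\<gamma> s) (act g -` B \<inter> space S))"

end

theory Submission
  imports Defs
begin

text \<open>Write mu_s b for the integral of h \<mapsto> b(h s) against lambda. Fubini's theorem and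
  left invariance of lambda give that the lambda-integral of h \<mapsto> b(h^-1 s) / mu_(h^-1 s) v equals
  mu_s b / mu_s v, and a left translation shows that this integral is constant along orbits; with
  the hypothesis on O this makes mu_s w = c mu_s v for a single constant c. Expanding mu_t a as an
  integral over the group, exchanging it with the integral against gamma and mu, and using the
  invariance of mu, gamma and m to move h onto s yields the exchange rule
    mu_t a * b(s) / mu_s v * m(s,t)  ~  a(t) * mu_s b / mu_s v * m(s,t)
  under the gamma-mu integral. Applied to (a,b) = (v,w), (w,v) and (v,v), it shows that both
  Delta_v(s,t) w(s) m(s,t) and w(t) m(s,t) integrate to c times the integral of v(t) m(s,t).
  Finally the balance hypothesis, extended from indicators to all measurable functions, turns the
  gamma-mu integral of w(t) m(s,t) into the delta-nu integral.\<close>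

lemma ennreal_mult_divide_cancel:
  fixes a c :: ennreal
  shows "0 < c \<Longrightarrow> c < \<infinity> \<Longrightarrow> c * (a / c) = a"
  by (simp add: ennreal_times_divide mult.commute mult_divide_eq_ennreal)

lemma ennreal_mult_divide_mult_cancel:
  fixes a b c :: ennreal
  shows "0 < c \<Longrightarrow> c < \<infinity> \<Longrightarrow> c * (a / c * b) = a * b"
  by (simp add: ennreal_mult_divide_cancel flip: mult.assoc)

lemma ennreal_mult_eq_imp_eq_divide:
  fixes a c x :: ennreal
  shows "0 < c \<Longrightarrow> c < \<infinity> \<Longrightarrow> c * x = a \<Longrightarrow> x = a / c"
  using mult_divide_eq_ennreal[of c x] by (auto simp: mult.commute)

lemma locally_compact_imp_sigma_finite_measure:
  fixes M :: "'a::{second_countable_topology,t2_space} measure"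
  assumes lc: "locally_compact_space (euclidean :: 'a topology)"
    and sets_M: "sets M = sets borel"
    and compact_finite: "\<And>K. compact K \<Longrightarrow> emeasure M K < \<infinity>"
  shows "sigma_finite_measure M"
proof -
  obtain BB :: "'a set set" where BB: "countable BB" "topological_basis BB"
    using ex_countable_basis by blast
  define C where "C = {b \<in> BB. \<exists>K. compact K \<and> b \<subseteq> K}"
  define cover where "cover b = (SOME K. compact K \<and> b \<subseteq> K)" for b :: "'a set"
  have cover: "compact (cover b) \<and> b \<subseteq> cover b" if "b \<in> C" for b
    using someI_ex[of "\<lambda>K. compact K \<and> b \<subseteq> K"] that unfolding C_def cover_def by auto
  have space_M: "space M = UNIV"
    using sets_eq_imp_space_eq[OF sets_M] by simp
  show ?thesis
    unfolding sigma_finite_measure_def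
  proof (intro exI conjI)
    show "countable (cover ` C)"
      using BB(1) unfolding C_def by auto
    show "cover ` C \<subseteq> sets M"
      using cover by (auto simp: sets_M intro!: borel_closed compact_imp_closed)
    show "\<forall>a\<in>cover ` C. emeasure M a \<noteq> \<infinity>"
      using cover compact_finite by (auto simp: less_top)
    have "x \<in> \<Union> (cover ` C)" for x
    proof -
      obtain U K where "openin euclidean U" "compactin euclidean K" "x \<in> U" "U \<subseteq> K"
        using lc unfolding locally_compact_space_def by (simp, meson)
      moreover obtain b where "b \<in> BB" "x \<in> b" "b \<subseteq> U"
        using topological_basisE[OF BB(2)] calculation by (metis open_openin)
      ultimately have "b \<in> C" "x \<in> b"
        unfolding C_def by auto
      then show ?thesis
        using cover by blast
    qed
    then show "\<Union> (cover ` C) = space M"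
      by (auto simp: space_M)
  qed
qed

lemma normalised_restriction_subprob_kernel:
  fixes K :: "'x \<Rightarrow> 's measure"
  assumes sets_K: "\<And>x. x \<in> space X \<Longrightarrow> sets (K x) = sets S"
    and emeasure_K: "\<And>A. A \<in> sets S \<Longrightarrow> (\<lambda>x. emeasure (K x) A) \<in> borel_measurable X"
    and B: "B \<in> sets S" and S_nonempty: "space S \<noteq> {}"
  shows "(\<lambda>x. density (K x) (\<lambda>t. indicator B t / (1 + emeasure (K x) B))) \<in> X \<rightarrow>\<^sub>M subprob_algebra S"
    (is "?K' \<in> _")
proof -
  have emeasure_K': "emeasure (?K' x) A = emeasure (K x) (A \<inter> B) / (1 + emeasure (K x) B)"
    if x: "x \<in> space X" and A: "A \<in> sets S" for x A
  proof -
    have "emeasure (?K' x) A = \<integral>\<^sup>+t. indicator (A \<inter> B) t / (1 + emeasure (K x) B) \<partial>K x"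
      using A B sets_K[OF x] by (subst emeasure_density) (auto intro!: nn_integral_cong simp: indicator_def)
    also have "\<dots> = emeasure (K x) (A \<inter> B) / (1 + emeasure (K x) B)"
      using A B sets_K[OF x] by (simp add: nn_integral_divide)
    finally show ?thesis .
  qed
  show ?thesis
  proof (rule measurable_subprob_algebra)
    fix x assume x: "x \<in> space X"
    show sets_K': "sets (?K' x) = sets S"
      using sets_K[OF x] by simp
    have "emeasure (K x) (space S \<inter> B) / (1 + emeasure (K x) B) \<le> 1"
      using sets.sets_into_space[OF B]
      by (intro divide_le_posI_ennreal) (auto simp: add_pos_nonneg Int_absorb1 intro: add_increasing)
    then show "subprob_space (?K' x)"
      using S_nonempty emeasure_K'[OF x, of "space S"]
      by (intro subprob_spaceI) (auto simp: sets_eq_imp_space_eq[OF sets_K'] sets_eq_imp_space_eq[OF sets_K[OF x]])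
  next
    fix A assume A: "A \<in> sets S"
    have "(\<lambda>x. emeasure (K x) (A \<inter> B) / (1 + emeasure (K x) B)) \<in> borel_measurable X"
      using emeasure_K[of "A \<inter> B"] emeasure_K[OF B] A B by measurable
    then show "(\<lambda>x. emeasure (?K' x) A) \<in> borel_measurable X"
      using A by (simp add: emeasure_K' cong: measurable_cong)
  qed
qed

text \<open>K x is the sum over n of (1 + K x (B n)) times its normalised restriction to B n.\<close>

lemma kernel_nn_integral_measurable:
  fixes K :: "'x \<Rightarrow> 's measure" and f :: "'x \<Rightarrow> 's \<Rightarrow> ennreal" and B :: "nat \<Rightarrow> 's set"
  assumes sets_K: "\<And>x. x \<in> space X \<Longrightarrow> sets (K x) = sets S"
    and emeasure_K: "\<And>A. A \<in> sets S \<Longrightarrow> (\<lambda>x. emeasure (K x) A) \<in> borel_measurable X"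
    and B: "range B \<subseteq> sets S" "disjoint_family B" "(\<Union>n. B n) = space S"
    and finite_K: "\<And>x n. x \<in> space X \<Longrightarrow> emeasure (K x) (B n) < \<infinity>"
    and f: "(\<lambda>(x,t). f x t) \<in> borel_measurable (X \<Otimes>\<^sub>M S)"
  shows "(\<lambda>x. \<integral>\<^sup>+t. f x t \<partial>K x) \<in> borel_measurable X"
proof (cases "space S = {}")
  case True
  then have "(\<integral>\<^sup>+t. f x t \<partial>K x) = 0" if "x \<in> space X" for x
    using sets_eq_imp_space_eq[OF sets_K[OF that]] by (simp add: nn_integral_empty)
  then show ?thesis
    by (simp cong: measurable_cong)
next
  case False
  define K' where "K' n x = density (K x) (\<lambda>t. indicator (B n) t / (1 + emeasure (K x) (B n)))" for n x
  have B_sets: "B n \<in> sets S" for n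
    using B by auto
  have K'_subprob: "K' n \<in> X \<rightarrow>\<^sub>M subprob_algebra S" for n
    unfolding K'_def using sets_K emeasure_K B_sets False by (rule normalised_restriction_subprob_kernel)
  have decompose: "(\<integral>\<^sup>+t. f x t \<partial>K x) = (\<Sum>n. (1 + emeasure (K x) (B n)) * \<integral>\<^sup>+t. f x t \<partial>K' n x)"
    if x: "x \<in> space X" for x
  proof -
    have f_x: "f x \<in> borel_measurable (K x)"
      using measurable_Pair2[OF f x] sets_K[OF x] by (simp cong: measurable_cong_sets)
    have "(1 + emeasure (K x) (B n)) * (\<integral>\<^sup>+t. f x t \<partial>K' n x) = \<integral>\<^sup>+t. indicator (B n) t * f x t \<partial>K x"
      for n
      unfolding K'_def using f_x B_sets sets_K[OF x] finite_K[OF x, of n]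
      by (simp add: nn_integral_density ennreal_mult_divide_mult_cancel add_pos_nonneg flip: nn_integral_cmult)
    then have "(\<Sum>n. (1 + emeasure (K x) (B n)) * \<integral>\<^sup>+t. f x t \<partial>K' n x) =
        (\<Sum>n. \<integral>\<^sup>+t. indicator (B n) t * f x t \<partial>K x)"
      by simp
    also have "\<dots> = \<integral>\<^sup>+t. (\<Sum>n. indicator (B n) t * f x t) \<partial>K x"
      using f_x B_sets sets_K[OF x] by (intro nn_integral_suminf[symmetric]) auto
    also have "\<dots> = \<integral>\<^sup>+t. f x t \<partial>K x"
      using B sets_eq_imp_space_eq[OF sets_K[OF x]]
      by (intro nn_integral_cong) (auto simp: ennreal_suminf_multc suminf_indicator)
    finally show ?thesis ..
  qed
  have "(\<lambda>x. \<Sum>n. (1 + emeasure (K x) (B n)) * \<integral>\<^sup>+t. f x t \<partial>K' n x) \<in> borel_measurable X"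
    using nn_integral_measurable_subprob_algebra2[OF f K'_subprob] emeasure_K[OF B_sets]
    by measurable
  then show ?thesis
    by (simp add: decompose cong: measurable_cong)
qed

lemma
  assumes "sigma_finite_kernel S K"
  shows sets_sigma_finite_kernel: "s \<in> space S \<Longrightarrow> sets (K s) = sets S"
    and sigma_finite_kernel_emeasure_measurable:
      "A \<in> sets S \<Longrightarrow> (\<lambda>s. emeasure (K s) A) \<in> borel_measurable S"
  using assms unfolding sigma_finite_kernel_def by blast+

lemma sigma_finite_kernel_partition:
  fixes S :: "'s measure"
  assumes "sigma_finite_kernel S K"
  obtains B :: "nat \<Rightarrow> 's set" where "range B \<subseteq> sets S" "disjoint_family B" "(\<Union>n. B n) = space S"
    "\<And>s n. s \<in> space S \<Longrightarrow> emeasure (K s) (B n) < \<infinity>"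
proof -
  have "\<exists>B :: nat \<Rightarrow> 's set. range B \<subseteq> sets S \<and> disjoint_family B \<and> (\<Union>n. B n) = space S \<and>
      (\<forall>s\<in>space S. \<forall>n. emeasure (K s) (B n) < \<infinity>)"
    using assms unfolding sigma_finite_kernel_def by (elim conjE)
  then obtain B :: "nat \<Rightarrow> 's set" where "range B \<subseteq> sets S \<and> disjoint_family B \<and> (\<Union>n. B n) = space S \<and>
      (\<forall>s\<in>space S. \<forall>n. emeasure (K s) (B n) < \<infinity>)" ..
  then show thesis
    by (intro that[of B]) simp_all
qed

lemma sigma_finite_kernel_nn_integral_measurable:
  fixes S :: "'s measure"
  assumes K: "sigma_finite_kernel S K"
    and f: "(\<lambda>(x,t). f x t) \<in> borel_measurable (X \<Otimes>\<^sub>M S)"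
    and p: "p \<in> X \<rightarrow>\<^sub>M S"
  shows "(\<lambda>x. \<integral>\<^sup>+t. f x t \<partial>K (p x)) \<in> borel_measurable X"
proof -
  obtain B :: "nat \<Rightarrow> 's set" where B: "range B \<subseteq> sets S" "disjoint_family B" "(\<Union>n. B n) = space S"
    and finite_K: "\<And>s n. s \<in> space S \<Longrightarrow> emeasure (K s) (B n) < \<infinity>"
    using sigma_finite_kernel_partition[OF K] by metis
  show ?thesis
  proof (rule kernel_nn_integral_measurable[OF _ _ B _ f])
    fix A assume "A \<in> sets S"
    then show "(\<lambda>x. emeasure (K (p x)) A) \<in> borel_measurable X"
      using measurable_compose[OF p sigma_finite_kernel_emeasure_measurable[OF K]] by simp
  qed (use measurable_space[OF p] sets_sigma_finite_kernel[OF K] finite_K in auto)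
qed

lemma sigma_finite_kernel_sigma_finite_measure:
  fixes S :: "'s measure"
  assumes K: "sigma_finite_kernel S K" and s: "s \<in> space S"
  shows "sigma_finite_measure (K s)"
proof -
  obtain B :: "nat \<Rightarrow> 's set" where B: "range B \<subseteq> sets S" "disjoint_family B" "(\<Union>n. B n) = space S"
    and finite_K: "\<And>s n. s \<in> space S \<Longrightarrow> emeasure (K s) (B n) < \<infinity>"
    using sigma_finite_kernel_partition[OF K] by metis
  have sets_K: "sets (K s) = sets S"
    using sets_sigma_finite_kernel[OF K s] .
  show ?thesis
    unfolding sigma_finite_measure_def
  proof (intro exI conjI)
    show "countable (range B)" "range B \<subseteq> sets (K s)" "\<Union> (range B) = space (K s)"
      using B sets_K sets_eq_imp_space_eq[OF sets_K] by auto
    show "\<forall>a\<in>range B. emeasure (K s) a \<noteq> \<infinity>"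
      using finite_K[OF s] by (auto simp: less_top)
  qed
qed

lemma kernel_slice_measurable:
  fixes S :: "'s measure" and K :: "'s \<Rightarrow> 's measure"
  assumes K: "sigma_finite_kernel S K"
    and f: "(\<lambda>(s,t). f s t) \<in> borel_measurable (S \<Otimes>\<^sub>M S)" and s: "s \<in> space S"
  shows "f s \<in> borel_measurable (K s)"
  using measurable_Pair2[OF f s] sets_sigma_finite_kernel[OF K s] by (simp cong: measurable_cong_sets)

lemma kernel_integral_measurable:
  fixes M S :: "'s measure" and K :: "'s \<Rightarrow> 's measure"
  assumes sets_M: "sets M = sets S" and K: "sigma_finite_kernel S K"
    and f: "(\<lambda>(s,t). f s t) \<in> borel_measurable (S \<Otimes>\<^sub>M S)"
  shows "(\<lambda>s. \<integral>\<^sup>+t. f s t \<partial>K s) \<in> borel_measurable M"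
  using sigma_finite_kernel_nn_integral_measurable[OF K f measurable_ident] sets_M
  by (simp cong: measurable_cong_sets)

lemma nn_integral_kernel_cong:
  fixes M S :: "'s measure" and K :: "'s \<Rightarrow> 's measure"
  assumes sets_M: "sets M = sets S" and K: "sigma_finite_kernel S K"
    and fg: "\<And>s t. s \<in> space S \<Longrightarrow> t \<in> space S \<Longrightarrow> f s t = g s t"
  shows "(\<integral>\<^sup>+s. \<integral>\<^sup>+t. f s t \<partial>K s \<partial>M) = (\<integral>\<^sup>+s. \<integral>\<^sup>+t. g s t \<partial>K s \<partial>M)"
  using fg sets_eq_imp_space_eq[OF sets_M] sets_eq_imp_space_eq[OF sets_sigma_finite_kernel[OF K]]
  by (intro nn_integral_cong) simp

lemma nn_integral_kernel_cmult:
  fixes M S :: "'s measure" and K :: "'s \<Rightarrow> 's measure"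
  assumes sets_M: "sets M = sets S" and K: "sigma_finite_kernel S K"
    and f: "(\<lambda>(s,t). f s t) \<in> borel_measurable (S \<Otimes>\<^sub>M S)"
  shows "(\<integral>\<^sup>+s. \<integral>\<^sup>+t. c * f s t \<partial>K s \<partial>M) = c * (\<integral>\<^sup>+s. \<integral>\<^sup>+t. f s t \<partial>K s \<partial>M)"
proof -
  have "(\<integral>\<^sup>+s. \<integral>\<^sup>+t. c * f s t \<partial>K s \<partial>M) = (\<integral>\<^sup>+s. c * \<integral>\<^sup>+t. f s t \<partial>K s \<partial>M)"
    using kernel_slice_measurable[OF K f] sets_eq_imp_space_eq[OF sets_M]
    by (intro nn_integral_cong nn_integral_cmult) simp
  also have "\<dots> = c * (\<integral>\<^sup>+s. \<integral>\<^sup>+t. f s t \<partial>K s \<partial>M)"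
    using kernel_integral_measurable[OF sets_M K f] by (rule nn_integral_cmult)
  finally show ?thesis .
qed

lemma nn_integral_kernel_add:
  fixes M S :: "'s measure" and K :: "'s \<Rightarrow> 's measure"
  assumes sets_M: "sets M = sets S" and K: "sigma_finite_kernel S K"
    and f: "(\<lambda>(s,t). f s t) \<in> borel_measurable (S \<Otimes>\<^sub>M S)"
    and g: "(\<lambda>(s,t). g s t) \<in> borel_measurable (S \<Otimes>\<^sub>M S)"
  shows "(\<integral>\<^sup>+s. \<integral>\<^sup>+t. f s t + g s t \<partial>K s \<partial>M) =
    (\<integral>\<^sup>+s. \<integral>\<^sup>+t. f s t \<partial>K s \<partial>M) + (\<integral>\<^sup>+s. \<integral>\<^sup>+t. g s t \<partial>K s \<partial>M)"
proof -
  have "(\<integral>\<^sup>+s. \<integral>\<^sup>+t. f s t + g s t \<partial>K s \<partial>M) =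
      (\<integral>\<^sup>+s. (\<integral>\<^sup>+t. f s t \<partial>K s) + (\<integral>\<^sup>+t. g s t \<partial>K s) \<partial>M)"
    using kernel_slice_measurable[OF K f] kernel_slice_measurable[OF K g] sets_eq_imp_space_eq[OF sets_M]
    by (intro nn_integral_cong nn_integral_add) simp_all
  also have "\<dots> = (\<integral>\<^sup>+s. \<integral>\<^sup>+t. f s t \<partial>K s \<partial>M) + (\<integral>\<^sup>+s. \<integral>\<^sup>+t. g s t \<partial>K s \<partial>M)"
    using kernel_integral_measurable[OF sets_M K f] kernel_integral_measurable[OF sets_M K g] by (rule nn_integral_add)
  finally show ?thesis .
qed

lemma nn_integral_kernel_SUP:
  fixes M S :: "'s measure" and K :: "'s \<Rightarrow> 's measure"
  assumes sets_M: "sets M = sets S" and K: "sigma_finite_kernel S K"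
    and f: "\<And>i. (\<lambda>(s,t). f i s t) \<in> borel_measurable (S \<Otimes>\<^sub>M S)"
    and mono: "\<And>i s t. f i s t \<le> f (Suc i) s t"
  shows "(\<integral>\<^sup>+s. \<integral>\<^sup>+t. (SUP i. f i s t) \<partial>K s \<partial>M) = (SUP i. \<integral>\<^sup>+s. \<integral>\<^sup>+t. f i s t \<partial>K s \<partial>M)"
proof -
  have "(\<integral>\<^sup>+s. \<integral>\<^sup>+t. (SUP i. f i s t) \<partial>K s \<partial>M) = (\<integral>\<^sup>+s. (SUP i. \<integral>\<^sup>+t. f i s t \<partial>K s) \<partial>M)"
    using kernel_slice_measurable[OF K f] mono sets_eq_imp_space_eq[OF sets_M]
    by (intro nn_integral_cong nn_integral_monotone_convergence_SUP) (auto intro!: incseq_SucI le_funI)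
  also have "\<dots> = (SUP i. \<integral>\<^sup>+s. \<integral>\<^sup>+t. f i s t \<partial>K s \<partial>M)"
    using kernel_integral_measurable[OF sets_M K f] mono
    by (intro nn_integral_monotone_convergence_SUP) (auto intro!: incseq_SucI le_funI nn_integral_mono)
  finally show ?thesis .
qed

lemma nn_integral_kernel_balance:
  fixes u :: "'s \<times> 's \<Rightarrow> ennreal"
  assumes sets_mu: "sets mu = sets S" and sets_nu: "sets nu = sets S"
    and \<gamma>: "sigma_finite_kernel S \<gamma>" and \<delta>: "sigma_finite_kernel S \<delta>"
    and balance: "\<And>C. C \<in> sets (S \<Otimes>\<^sub>M S) \<Longrightarrow>
        (\<integral>\<^sup>+ s. (\<integral>\<^sup>+ t. indicator C (s, t) \<partial>\<gamma> s) \<partial>mu) =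
        (\<integral>\<^sup>+ t. (\<integral>\<^sup>+ s. indicator C (s, t) \<partial>\<delta> t) \<partial>nu)"
    and u: "u \<in> borel_measurable (S \<Otimes>\<^sub>M S)"
  shows "(\<integral>\<^sup>+ s. (\<integral>\<^sup>+ t. u (s, t) \<partial>\<gamma> s) \<partial>mu) = (\<integral>\<^sup>+ t. (\<integral>\<^sup>+ s. u (s, t) \<partial>\<delta> t) \<partial>nu)"
proof -
  have swap: "(\<lambda>(t,s). f (s,t)) \<in> borel_measurable (S \<Otimes>\<^sub>M S)"
    if [measurable]: "f \<in> borel_measurable (S \<Otimes>\<^sub>M S)" for f :: "'s \<times> 's \<Rightarrow> ennreal"
    by measurable
  from u show ?thesis
  proof (induct rule: borel_measurable_induct)
    case (cong f g)
    then show ?case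
      using nn_integral_kernel_cong[OF sets_mu \<gamma>, of "\<lambda>s t. f (s,t)" "\<lambda>s t. g (s,t)"]
        nn_integral_kernel_cong[OF sets_nu \<delta>, of "\<lambda>t s. f (s,t)" "\<lambda>t s. g (s,t)"]
      by (simp add: space_pair_measure)
  next
    case (set A)
    then show ?case by (rule balance)
  next
    case (mult f c)
    then show ?case
      using nn_integral_kernel_cmult[OF sets_mu \<gamma>, of "\<lambda>s t. f (s,t)" c] nn_integral_kernel_cmult[OF sets_nu \<delta>, of "\<lambda>t s. f (s,t)" c] swap[of f]
      by simp
  next
    case (add f g)
    then show ?case
      using nn_integral_kernel_add[OF sets_mu \<gamma>, of "\<lambda>s t. g (s,t)" "\<lambda>s t. f (s,t)"]
        nn_integral_kernel_add[OF sets_nu \<delta>, of "\<lambda>t s. g (s,t)" "\<lambda>t s. f (s,t)"] swap[of f] swap[of g]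
      by simp
  next
    case (seq U)
    have mono: "U i (s,t) \<le> U (Suc i) (s,t)" for i s t
      using \<open>incseq U\<close> by (auto simp: incseq_Suc_iff le_fun_def)
    show ?case
      using nn_integral_kernel_SUP[OF sets_mu \<gamma>, of "\<lambda>i s t. U i (s,t)"] nn_integral_kernel_SUP[OF sets_nu \<delta>, of "\<lambda>i t s. U i (s,t)"]
        seq(1,3) swap mono
      by (simp add: image_comp)
  qed
qed

locale lcsc_haar_group =
  fixes G :: "('g::{second_countable_topology,t2_space}, 'b) monoid_scheme" and lam :: "'g measure"
  assumes lcsc: "lcsc_topological_group G" and haar: "left_haar_measure G lam"
begin

lemma group: "group G" and carrier_UNIV: "carrier G = UNIV"
  using lcsc unfolding lcsc_topological_group_def by auto

lemma assoc [simp]: "x \<otimes>\<^bsub>G\<^esub> y \<otimes>\<^bsub>G\<^esub> z = x \<otimes>\<^bsub>G\<^esub> (y \<otimes>\<^bsub>G\<^esub> z)"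
  using group.is_monoid[OF group] carrier_UNIV by (simp add: monoid.m_assoc)

lemma l_inv [simp]: "inv\<^bsub>G\<^esub> x \<otimes>\<^bsub>G\<^esub> x = \<one>\<^bsub>G\<^esub>"
  using group carrier_UNIV by (simp add: group.l_inv)

lemma r_inv [simp]: "x \<otimes>\<^bsub>G\<^esub> inv\<^bsub>G\<^esub> x = \<one>\<^bsub>G\<^esub>"
  using group carrier_UNIV by (simp add: group.r_inv)

lemma l_one [simp]: "\<one>\<^bsub>G\<^esub> \<otimes>\<^bsub>G\<^esub> x = x"
  using group.is_monoid[OF group] carrier_UNIV by (simp add: monoid.l_one)

lemma inv_inv [simp]: "inv\<^bsub>G\<^esub> (inv\<^bsub>G\<^esub> x) = x"
  using group carrier_UNIV by (simp add: group.inv_inv)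

lemma inv_mult [simp]: "inv\<^bsub>G\<^esub> (x \<otimes>\<^bsub>G\<^esub> y) = inv\<^bsub>G\<^esub> y \<otimes>\<^bsub>G\<^esub> inv\<^bsub>G\<^esub> x"
  using group carrier_UNIV by (simp add: group.inv_mult_group)

lemma inv_cancel_left [simp]: "inv\<^bsub>G\<^esub> x \<otimes>\<^bsub>G\<^esub> (x \<otimes>\<^bsub>G\<^esub> y) = y"
  by (simp flip: assoc)

lemma mult_inv_cancel_left [simp]: "x \<otimes>\<^bsub>G\<^esub> (inv\<^bsub>G\<^esub> x \<otimes>\<^bsub>G\<^esub> y) = y"
  by (simp flip: assoc)

lemma mult_measurable [measurable (raw)]:
  assumes "f \<in> M \<rightarrow>\<^sub>M borel" "g \<in> M \<rightarrow>\<^sub>M borel"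
  shows "(\<lambda>x. f x \<otimes>\<^bsub>G\<^esub> g x) \<in> M \<rightarrow>\<^sub>M borel"
proof -
  have "(\<lambda>(x, y). x \<otimes>\<^bsub>G\<^esub> y) \<in> borel_measurable (borel \<Otimes>\<^sub>M borel)"
    using lcsc unfolding lcsc_topological_group_def borel_prod
    by (auto intro: borel_measurable_continuous_onI)
  from measurable_compose[OF measurable_Pair[OF assms] this] show ?thesis
    by simp
qed

lemma inv_measurable [measurable (raw)]:
  assumes "f \<in> M \<rightarrow>\<^sub>M borel"
  shows "(\<lambda>x. inv\<^bsub>G\<^esub> (f x)) \<in> M \<rightarrow>\<^sub>M borel"
proof -
  have "(\<lambda>x. inv\<^bsub>G\<^esub> x) \<in> borel_measurable borel"
    using lcsc unfolding lcsc_topological_group_def by (auto intro: borel_measurable_continuous_onI)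
  from measurable_compose[OF assms this] show ?thesis .
qed

lemma sets_lam [measurable_cong]: "sets lam = sets borel"
  using haar unfolding left_haar_measure_def by auto

lemma space_lam [simp]: "space lam = UNIV"
  using sets_eq_imp_space_eq[OF sets_lam] by simp

lemma nn_integral_left_translate:
  assumes f: "f \<in> borel_measurable borel"
  shows "(\<integral>\<^sup>+x. f (a \<otimes>\<^bsub>G\<^esub> x) \<partial>lam) = (\<integral>\<^sup>+x. f x \<partial>lam)"
proof -
  have translate: "(\<lambda>x. a \<otimes>\<^bsub>G\<^esub> x) \<in> lam \<rightarrow>\<^sub>M borel"
    by (simp cong: measurable_cong_sets)
  have distr_translate: "distr lam borel (\<lambda>x. a \<otimes>\<^bsub>G\<^esub> x) = lam"
  proof (rule measure_eqI)
    fix A assume "A \<in> sets (distr lam borel (\<lambda>x. a \<otimes>\<^bsub>G\<^esub> x))"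
    then have A: "A \<in> sets borel" by simp
    have "(\<lambda>x. a \<otimes>\<^bsub>G\<^esub> x) -` A = (\<lambda>x. inv\<^bsub>G\<^esub> a \<otimes>\<^bsub>G\<^esub> x) ` A"
      by (auto intro: image_eqI[where x = "a \<otimes>\<^bsub>G\<^esub> x" for x])
    then show "emeasure (distr lam borel (\<lambda>x. a \<otimes>\<^bsub>G\<^esub> x)) A = emeasure lam A"
      using haar A unfolding left_haar_measure_def by (simp add: emeasure_distr[OF translate A])
  qed (simp add: sets_lam)
  have "(\<integral>\<^sup>+x. f (a \<otimes>\<^bsub>G\<^esub> x) \<partial>lam) = (\<integral>\<^sup>+x. f x \<partial>distr lam borel (\<lambda>x. a \<otimes>\<^bsub>G\<^esub> x))"
    using f by (intro nn_integral_distr[OF translate, symmetric]) simp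
  then show ?thesis
    by (simp only: distr_translate)
qed

lemma sigma_finite_lam: "sigma_finite_measure lam"
  using lcsc haar unfolding lcsc_topological_group_def left_haar_measure_def
  by (intro locally_compact_imp_sigma_finite_measure) auto

sublocale lam: sigma_finite_measure lam
  by (rule sigma_finite_lam)

sublocale lam_lam: pair_sigma_finite lam lam ..

text \<open>Only left translations are substituted, so the modular function never enters.\<close>

lemma nn_integral_right_translate_exchange:
  assumes f [measurable]: "f \<in> borel_measurable borel" and g [measurable]: "g \<in> borel_measurable borel"
  shows "(\<integral>\<^sup>+x. g x * (\<integral>\<^sup>+y. f (y \<otimes>\<^bsub>G\<^esub> x) \<partial>lam) \<partial>lam) =
    (\<integral>\<^sup>+y. f y \<partial>lam) * (\<integral>\<^sup>+x. g (inv\<^bsub>G\<^esub> x) \<partial>lam)"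
proof -
  have left_y: "(\<integral>\<^sup>+x. g x * f (y \<otimes>\<^bsub>G\<^esub> x) \<partial>lam) = (\<integral>\<^sup>+x. g (inv\<^bsub>G\<^esub> y \<otimes>\<^bsub>G\<^esub> x) * f x \<partial>lam)" for y
    using nn_integral_left_translate[of "\<lambda>x. g (inv\<^bsub>G\<^esub> y \<otimes>\<^bsub>G\<^esub> x) * f x" y] by simp
  have left_x: "(\<integral>\<^sup>+y. g (inv\<^bsub>G\<^esub> y \<otimes>\<^bsub>G\<^esub> x) \<partial>lam) = (\<integral>\<^sup>+y. g (inv\<^bsub>G\<^esub> y) \<partial>lam)" for x
    using nn_integral_left_translate[of "\<lambda>y. g (inv\<^bsub>G\<^esub> y)" "inv\<^bsub>G\<^esub> x"] by simp
  have "(\<integral>\<^sup>+x. g x * (\<integral>\<^sup>+y. f (y \<otimes>\<^bsub>G\<^esub> x) \<partial>lam) \<partial>lam) =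
      (\<integral>\<^sup>+x. \<integral>\<^sup>+y. g x * f (y \<otimes>\<^bsub>G\<^esub> x) \<partial>lam \<partial>lam)"
    by (simp add: nn_integral_cmult)
  also have "\<dots> = (\<integral>\<^sup>+y. \<integral>\<^sup>+x. g x * f (y \<otimes>\<^bsub>G\<^esub> x) \<partial>lam \<partial>lam)"
    by (rule lam_lam.Fubini'[symmetric]) measurable
  also have "\<dots> = (\<integral>\<^sup>+y. \<integral>\<^sup>+x. g (inv\<^bsub>G\<^esub> y \<otimes>\<^bsub>G\<^esub> x) * f x \<partial>lam \<partial>lam)"
    by (simp only: left_y)
  also have "\<dots> = (\<integral>\<^sup>+x. \<integral>\<^sup>+y. g (inv\<^bsub>G\<^esub> y \<otimes>\<^bsub>G\<^esub> x) * f x \<partial>lam \<partial>lam)"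
    by (rule lam_lam.Fubini') measurable
  also have "\<dots> = (\<integral>\<^sup>+x. f x * (\<integral>\<^sup>+y. g (inv\<^bsub>G\<^esub> y) \<partial>lam) \<partial>lam)"
    by (intro nn_integral_cong, subst nn_integral_multc, measurable, simp add: left_x mult.commute)
  also have "\<dots> = (\<integral>\<^sup>+y. f y \<partial>lam) * (\<integral>\<^sup>+x. g (inv\<^bsub>G\<^esub> x) \<partial>lam)"
    by (simp add: nn_integral_multc)
  finally show ?thesis .
qed

end

locale haar_group_action = lcsc_haar_group G lam
  for G :: "('g::{second_countable_topology,t2_space}, 'b) monoid_scheme" and lam +
  fixes S :: "'s measure" and act :: "'g \<Rightarrow> 's \<Rightarrow> 's"
  assumes action: "measurable_action G S act"
begin

lemma act_one: "s \<in> space S \<Longrightarrow> act \<one>\<^bsub>G\<^esub> s = s"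
  and act_mult: "s \<in> space S \<Longrightarrow> act (g \<otimes>\<^bsub>G\<^esub> h) s = act g (act h s)"
  using action unfolding measurable_action_def by auto

lemma act_pair_measurable: "(\<lambda>(g, s). act g s) \<in> borel \<Otimes>\<^sub>M S \<rightarrow>\<^sub>M S"
  using action unfolding measurable_action_def by auto

lemma act_measurable [measurable (raw)]:
  assumes "f \<in> M \<rightarrow>\<^sub>M borel" "g \<in> M \<rightarrow>\<^sub>M S"
  shows "(\<lambda>x. act (f x) (g x)) \<in> M \<rightarrow>\<^sub>M S"
  using measurable_compose[OF measurable_Pair[OF assms] act_pair_measurable] by simp

lemma act_space: "s \<in> space S \<Longrightarrow> act g s \<in> space S"
  using measurable_space[OF act_measurable[OF measurable_const measurable_ident_sets[OF refl]]]
  by simp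

lemma act_orbit_measurable: "s \<in> space S \<Longrightarrow> (\<lambda>h. act h s) \<in> borel \<rightarrow>\<^sub>M S"
  by measurable

definition orbit_integral :: "('s \<Rightarrow> ennreal) \<Rightarrow> 's \<Rightarrow> ennreal" where
  "orbit_integral b s = (\<integral>\<^sup>+h. b (act h s) \<partial>lam)"

lemma orbit_integral_measurable [measurable]:
  assumes [measurable]: "b \<in> borel_measurable S"
  shows "orbit_integral b \<in> borel_measurable S"
proof -
  have "(\<lambda>(s, h). b (act h s)) \<in> borel_measurable (S \<Otimes>\<^sub>M lam)"
    by (simp add: split_beta') measurable
  from lam.borel_measurable_nn_integral[OF this] show ?thesis
    unfolding orbit_integral_def by simp
qed

lemma nn_integral_orbit_measure:
  assumes "b \<in> borel_measurable S" and "s \<in> space S"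
  shows "(\<integral>\<^sup>+x. b x \<partial>orbit_measure lam S act s) = orbit_integral b s"
  using assms act_orbit_measurable[OF assms(2)] unfolding orbit_measure_def orbit_integral_def
  by (subst nn_integral_distr) (simp_all cong: measurable_cong_sets)

lemma orbit_integral_act:
  "s \<in> space S \<Longrightarrow> orbit_integral b (act x s) = (\<integral>\<^sup>+y. b (act (y \<otimes>\<^bsub>G\<^esub> x) s) \<partial>lam)"
  unfolding orbit_integral_def by (simp add: act_mult)

lemma nn_integral_orbit_ratio:
  assumes v [measurable]: "v \<in> borel_measurable S"
    and v_pos: "\<And>s. s \<in> space S \<Longrightarrow> 0 < orbit_integral v s"
    and v_fin: "\<And>s. s \<in> space S \<Longrightarrow> orbit_integral v s < \<infinity>"
    and b [measurable]: "b \<in> borel_measurable S" and s: "s \<in> space S"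
  shows "(\<integral>\<^sup>+h. b (act (inv\<^bsub>G\<^esub> h) s) / orbit_integral v (act (inv\<^bsub>G\<^esub> h) s) \<partial>lam) =
    orbit_integral b s / orbit_integral v s"
proof -
  note [measurable] = act_orbit_measurable[OF s]
  define g where "g x = b (act x s) / orbit_integral v (act x s)" for x
  have g_cancel: "g x * orbit_integral v (act x s) = b (act x s)" for x
    using ennreal_mult_divide_cancel[of "orbit_integral v (act x s)" "b (act x s)"]
      v_pos[OF act_space[OF s]] v_fin[OF act_space[OF s]]
    unfolding g_def by (auto simp: mult.commute)
  have "orbit_integral b s = (\<integral>\<^sup>+x. g x * (\<integral>\<^sup>+y. v (act (y \<otimes>\<^bsub>G\<^esub> x) s) \<partial>lam) \<partial>lam)"
    unfolding orbit_integral_def[of b] by (simp only: orbit_integral_act[OF s, symmetric] g_cancel)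
  also have "\<dots> = orbit_integral v s * (\<integral>\<^sup>+x. g (inv\<^bsub>G\<^esub> x) \<partial>lam)"
    unfolding orbit_integral_def[of v] g_def
    by (rule nn_integral_right_translate_exchange[where f = "\<lambda>y. v (act y s)"]) measurable
  finally show ?thesis
    using v_pos[OF s] v_fin[OF s] unfolding g_def
    by (intro ennreal_mult_eq_imp_eq_divide) auto
qed

text \<open>Both ratios are orbit averages by nn_integral_orbit_ratio, and a left translation by
  inv x carries one onto the other.\<close>

lemma orbit_ratio_act:
  assumes v: "v \<in> borel_measurable S"
    and v_pos: "\<And>s. s \<in> space S \<Longrightarrow> 0 < orbit_integral v s"
    and v_fin: "\<And>s. s \<in> space S \<Longrightarrow> orbit_integral v s < \<infinity>"
    and b: "b \<in> borel_measurable S" and s: "s \<in> space S"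
  shows "orbit_integral b (act x s) / orbit_integral v (act x s) = orbit_integral b s / orbit_integral v s"
proof -
  note [measurable] = v b act_orbit_measurable[OF s]
  define F where "F h = b (act (inv\<^bsub>G\<^esub> h) s) / orbit_integral v (act (inv\<^bsub>G\<^esub> h) s)" for h
  have "orbit_integral b (act x s) / orbit_integral v (act x s) = (\<integral>\<^sup>+h. F (inv\<^bsub>G\<^esub> x \<otimes>\<^bsub>G\<^esub> h) \<partial>lam)"
    unfolding F_def using nn_integral_orbit_ratio[OF v v_pos v_fin b act_space[OF s]]
    by (simp add: act_mult s)
  also have "\<dots> = (\<integral>\<^sup>+h. F h \<partial>lam)"
    unfolding F_def by (rule nn_integral_left_translate) measurable
  also have "\<dots> = orbit_integral b s / orbit_integral v s"
    unfolding F_def by (rule nn_integral_orbit_ratio[OF v v_pos v_fin b s])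
  finally show ?thesis .
qed

lemma orbit_ratio_constant:
  assumes v: "v \<in> borel_measurable S" and w: "w \<in> borel_measurable S"
    and v_pos: "\<And>s. s \<in> space S \<Longrightarrow> 0 < orbit_integral v s"
    and v_fin: "\<And>s. s \<in> space S \<Longrightarrow> orbit_integral v s < \<infinity>"
    and Orb: "orbit_representatives S act Orb"
    and ratio: "\<And>b b'. b \<in> Orb \<Longrightarrow> b' \<in> Orb \<Longrightarrow>
      orbit_integral w b / orbit_integral v b = orbit_integral w b' / orbit_integral v b'"
  obtains c where "\<And>s. s \<in> space S \<Longrightarrow> orbit_integral w s = c * orbit_integral v s"
proof
  define c where "c = orbit_integral w (SOME b. b \<in> Orb) / orbit_integral v (SOME b. b \<in> Orb)"
  fix s assume s: "s \<in> space S"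
  obtain b g where b: "b \<in> Orb" "act g b = s"
    using Orb s unfolding orbit_representatives_def by blast
  have "b \<in> space S"
    using Orb b(1) sets.sets_into_space unfolding orbit_representatives_def by blast
  then have "orbit_integral w s / orbit_integral v s = orbit_integral w b / orbit_integral v b"
    using orbit_ratio_act[OF v v_pos v_fin w] b(2) by blast
  also have "\<dots> = c"
    unfolding c_def by (rule ratio[OF b(1) someI[of "\<lambda>b. b \<in> Orb", OF b(1)]])
  finally show "orbit_integral w s = c * orbit_integral v s"
    using v_pos[OF s] v_fin[OF s] by (auto simp: ennreal_divide_times)
qed

end

lemma sets_invariant_measure: "invariant_measure S act mu \<Longrightarrow> sets mu = sets S"
  unfolding invariant_measure_def by blast

lemma invariant_kernel_sigma_finite_kernel: "invariant_kernel S act \<gamma> \<Longrightarrow> sigma_finite_kernel S \<gamma>"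
  unfolding invariant_kernel_def by blast

locale invariant_kernel_action = haar_group_action G lam S act
  for G :: "('g::{second_countable_topology,t2_space}, 'b) monoid_scheme" and lam
    and S :: "'s measure" and act +
  fixes mu :: "'s measure" and \<gamma> :: "'s \<Rightarrow> 's measure"
  assumes mu: "invariant_measure S act mu" and mu_sigma_finite: "sigma_finite_measure mu"
    and gamma: "invariant_kernel S act \<gamma>"
begin

lemma sets_mu [measurable_cong]: "sets mu = sets S"
  and mu_act: "A \<in> sets S \<Longrightarrow> emeasure mu (act g -` A \<inter> space S) = emeasure mu A"
  using mu unfolding invariant_measure_def by auto

lemma space_mu [simp]: "space mu = space S"
  using sets_eq_imp_space_eq[OF sets_mu] .

lemma gamma_kernel: "sigma_finite_kernel S \<gamma>"
  and gamma_act: "s \<in> space S \<Longrightarrow> A \<in> sets S \<Longrightarrow>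
    emeasure (\<gamma> (act g s)) A = emeasure (\<gamma> s) (act g -` A \<inter> space S)"
  using gamma unfolding invariant_kernel_def by auto

lemma sets_gamma: "s \<in> space S \<Longrightarrow> sets (\<gamma> s) = sets S"
  using sets_sigma_finite_kernel[OF gamma_kernel] .

sublocale mu: sigma_finite_measure mu
  by (rule mu_sigma_finite)

lemma act_measurable_S [measurable]: "act g \<in> S \<rightarrow>\<^sub>M S"
  using act_measurable[OF measurable_const[of g] measurable_ident_sets[OF refl]] by (simp add: id_def)

lemma distr_mu_act: "distr mu S (act g) = mu"
proof (rule measure_eqI)
  fix A assume "A \<in> sets (distr mu S (act g))"
  then show "emeasure (distr mu S (act g)) A = emeasure mu A"
    by (simp add: emeasure_distr mu_act)
qed (simp add: sets_mu)

lemma distr_gamma_act: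
  assumes s: "s \<in> space S"
  shows "distr (\<gamma> s) S (act g) = \<gamma> (act g s)"
proof (rule measure_eqI)
  fix A assume "A \<in> sets (distr (\<gamma> s) S (act g))"
  then show "emeasure (distr (\<gamma> s) S (act g)) A = emeasure (\<gamma> (act g s)) A"
    using s sets_gamma[OF s] sets_eq_imp_space_eq[OF sets_gamma[OF s]]
    by (simp add: emeasure_distr gamma_act cong: measurable_cong_sets)
qed (simp add: s sets_gamma act_space)

definition kernel_integral :: "('s \<Rightarrow> 's \<Rightarrow> ennreal) \<Rightarrow> ennreal" where
  "kernel_integral F = (\<integral>\<^sup>+s. \<integral>\<^sup>+t. F s t \<partial>\<gamma> s \<partial>mu)"

lemma kernel_integral_cong:
  "(\<And>s t. s \<in> space S \<Longrightarrow> t \<in> space S \<Longrightarrow> F s t = F' s t) \<Longrightarrow> kernel_integral F = kernel_integral F'"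
  unfolding kernel_integral_def by (rule nn_integral_kernel_cong[OF sets_mu gamma_kernel])

lemma kernel_integral_cmult:
  "(\<lambda>(s,t). F s t) \<in> borel_measurable (S \<Otimes>\<^sub>M S) \<Longrightarrow>
    kernel_integral (\<lambda>s t. c * F s t) = c * kernel_integral F"
  unfolding kernel_integral_def by (rule nn_integral_kernel_cmult[OF sets_mu gamma_kernel])

lemma kernel_integral_act:
  assumes F: "(\<lambda>(s,t). F s t) \<in> borel_measurable (S \<Otimes>\<^sub>M S)"
  shows "kernel_integral (\<lambda>s t. F (act g s) (act g t)) = kernel_integral F"
proof -
  have F_slice: "F s \<in> borel_measurable S" if "s \<in> space S" for s
    using measurable_Pair2[OF F that] by simp
  have "(\<integral>\<^sup>+t. F (act g s) (act g t) \<partial>\<gamma> s) = (\<integral>\<^sup>+t. F (act g s) t \<partial>\<gamma> (act g s))"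
    if s: "s \<in> space S" for s
    using s F_slice[OF act_space[OF s]] sets_gamma[OF s]
    by (simp add: nn_integral_distr distr_gamma_act[symmetric] cong: measurable_cong_sets)
  then have "kernel_integral (\<lambda>s t. F (act g s) (act g t)) =
      (\<integral>\<^sup>+s. \<integral>\<^sup>+t. F (act g s) t \<partial>\<gamma> (act g s) \<partial>mu)"
    unfolding kernel_integral_def by (intro nn_integral_cong) simp
  also have "\<dots> = (\<integral>\<^sup>+s. \<integral>\<^sup>+t. F s t \<partial>\<gamma> s \<partial>distr mu S (act g))"
    using sigma_finite_kernel_nn_integral_measurable[OF gamma_kernel F measurable_ident_sets[OF refl]]
    by (subst nn_integral_distr) (simp_all cong: measurable_cong_sets)
  finally show ?thesis
    unfolding kernel_integral_def distr_mu_act .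
qed


lemma kernel_integral_nn_integral:
  assumes H: "(\<lambda>(h, s, t). H h s t) \<in> borel_measurable (borel \<Otimes>\<^sub>M (S \<Otimes>\<^sub>M S))"
  shows "kernel_integral (\<lambda>s t. \<integral>\<^sup>+h. H h s t \<partial>lam) = (\<integral>\<^sup>+h. kernel_integral (H h) \<partial>lam)"
proof -
  have H_comp [measurable]: "(\<lambda>x. H (f x) (g x) (k x)) \<in> borel_measurable M"
    if [measurable]: "f \<in> M \<rightarrow>\<^sub>M borel" "g \<in> M \<rightarrow>\<^sub>M S" "k \<in> M \<rightarrow>\<^sub>M S" for f g k and M :: "'z measure"
    using measurable_compose[OF _ H, of "\<lambda>x. (f x, g x, k x)"] by simp
  have "(\<integral>\<^sup>+t. \<integral>\<^sup>+h. H h s t \<partial>lam \<partial>\<gamma> s) = (\<integral>\<^sup>+h. \<integral>\<^sup>+t. H h s t \<partial>\<gamma> s \<partial>lam)"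
    if s: "s \<in> space S" for s
  proof -
    interpret gamma_s: sigma_finite_measure "\<gamma> s"
      by (rule sigma_finite_kernel_sigma_finite_measure[OF gamma_kernel s])
    interpret pair_sigma_finite "\<gamma> s" lam ..
    have "sets (\<gamma> s \<Otimes>\<^sub>M lam) = sets (S \<Otimes>\<^sub>M borel)"
      using sets_gamma[OF s] by (intro sets_pair_measure_cong) (auto simp: sets_lam)
    moreover have "(\<lambda>(t, h). H h s t) \<in> borel_measurable (S \<Otimes>\<^sub>M borel)"
      using s by (simp add: split_beta') measurable
    ultimately show ?thesis
      by (intro Fubini'[symmetric]) (simp cong: measurable_cong_sets)
  qed
  then have "kernel_integral (\<lambda>s t. \<integral>\<^sup>+h. H h s t \<partial>lam) = (\<integral>\<^sup>+s. \<integral>\<^sup>+h. \<integral>\<^sup>+t. H h s t \<partial>\<gamma> s \<partial>lam \<partial>mu)"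
    unfolding kernel_integral_def by (intro nn_integral_cong) simp
  also have "\<dots> = (\<integral>\<^sup>+h. \<integral>\<^sup>+s. \<integral>\<^sup>+t. H h s t \<partial>\<gamma> s \<partial>mu \<partial>lam)"
  proof -
    interpret pair_sigma_finite mu lam ..
    have "sets (mu \<Otimes>\<^sub>M lam) = sets (S \<Otimes>\<^sub>M borel)"
      by (intro sets_pair_measure_cong) (auto simp: sets_mu sets_lam)
    moreover have "(\<lambda>(s, h). \<integral>\<^sup>+t. H h s t \<partial>\<gamma> s) \<in> borel_measurable (S \<Otimes>\<^sub>M borel)"
      using sigma_finite_kernel_nn_integral_measurable[OF gamma_kernel, where p = fst and X = "S \<Otimes>\<^sub>M borel"
          and f = "\<lambda>x t. H (snd x) (fst x) t"]
      by (simp add: split_beta')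
    ultimately show ?thesis
      by (intro Fubini'[symmetric]) (simp cong: measurable_cong_sets)
  qed
  finally show ?thesis
    unfolding kernel_integral_def .
qed

lemma kernel_integral_orbit_exchange:
  assumes v [measurable]: "v \<in> borel_measurable S"
    and v_pos: "\<And>s. s \<in> space S \<Longrightarrow> 0 < orbit_integral v s"
    and v_fin: "\<And>s. s \<in> space S \<Longrightarrow> orbit_integral v s < \<infinity>"
    and a [measurable]: "a \<in> borel_measurable S" and b [measurable]: "b \<in> borel_measurable S"
    and m [measurable]: "(\<lambda>(s, t). m s t) \<in> borel_measurable (S \<Otimes>\<^sub>M S)"
    and m_act: "\<And>g s t. s \<in> space S \<Longrightarrow> t \<in> space S \<Longrightarrow> m (act g s) (act g t) = m s t"
  shows "kernel_integral (\<lambda>s t. orbit_integral a t * (b s / orbit_integral v s) * m s t) =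
    kernel_integral (\<lambda>s t. a t * (orbit_integral b s / orbit_integral v s) * m s t)"
proof -
  define r where "r h s = b (act (inv\<^bsub>G\<^esub> h) s) / orbit_integral v (act (inv\<^bsub>G\<^esub> h) s)" for h s
  have r_measurable [measurable]: "(\<lambda>(h, s). r h s) \<in> borel_measurable (borel \<Otimes>\<^sub>M S)"
    unfolding r_def by measurable
  have "kernel_integral (\<lambda>s t. orbit_integral a t * (b s / orbit_integral v s) * m s t) =
      kernel_integral (\<lambda>s t. \<integral>\<^sup>+h. a (act h t) * (b s / orbit_integral v s * m s t) \<partial>lam)"
    unfolding orbit_integral_def[of a]
    by (intro kernel_integral_cong) (simp add: nn_integral_multc mult.assoc)
  also have "\<dots> = (\<integral>\<^sup>+h. kernel_integral (\<lambda>s t. a (act h t) * (b s / orbit_integral v s * m s t)) \<partial>lam)"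
    by (rule kernel_integral_nn_integral) measurable
  also have "\<dots> = (\<integral>\<^sup>+h. kernel_integral (\<lambda>s t. a t * (r h s * m s t)) \<partial>lam)"
  proof (rule nn_integral_cong)
    fix h
    have "kernel_integral (\<lambda>s t. a (act h t) * (b s / orbit_integral v s * m s t)) =
        kernel_integral (\<lambda>s t. (\<lambda>s t. a t * (r h s * m s t)) (act h s) (act h t))"
      unfolding r_def by (intro kernel_integral_cong) (simp add: m_act act_one act_mult[symmetric])
    also have "\<dots> = kernel_integral (\<lambda>s t. a t * (r h s * m s t))"
      by (rule kernel_integral_act) measurable
    finally show "kernel_integral (\<lambda>s t. a (act h t) * (b s / orbit_integral v s * m s t)) =
        kernel_integral (\<lambda>s t. a t * (r h s * m s t))" .
  qed
  also have "\<dots> = kernel_integral (\<lambda>s t. \<integral>\<^sup>+h. a t * (r h s * m s t) \<partial>lam)"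
    by (rule kernel_integral_nn_integral[symmetric]) measurable
  also have "\<dots> = kernel_integral (\<lambda>s t. a t * (orbit_integral b s / orbit_integral v s) * m s t)"
  proof (rule kernel_integral_cong)
    fix s t assume s: "s \<in> space S"
    note [measurable] = act_orbit_measurable[OF s]
    have "(\<integral>\<^sup>+h. a t * (r h s * m s t) \<partial>lam) = (\<integral>\<^sup>+h. r h s \<partial>lam) * (a t * m s t)"
      unfolding r_def by (subst nn_integral_multc[symmetric]) (measurable, simp add: ac_simps)
    then show "(\<integral>\<^sup>+h. a t * (r h s * m s t) \<partial>lam) =
        a t * (orbit_integral b s / orbit_integral v s) * m s t"
      unfolding r_def by (simp add: nn_integral_orbit_ratio[OF v v_pos v_fin b s] ac_simps)
  qed
  finally show ?thesis .
qed


lemma kernel_integral_orbit_ratio: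
  assumes v [measurable]: "v \<in> borel_measurable S" and w [measurable]: "w \<in> borel_measurable S"
    and v_pos: "\<And>s. s \<in> space S \<Longrightarrow> 0 < orbit_integral v s"
    and v_fin: "\<And>s. s \<in> space S \<Longrightarrow> orbit_integral v s < \<infinity>"
    and Orb: "orbit_representatives S act Orb"
    and ratio: "\<And>b b'. b \<in> Orb \<Longrightarrow> b' \<in> Orb \<Longrightarrow>
      orbit_integral w b / orbit_integral v b = orbit_integral w b' / orbit_integral v b'"
    and m [measurable]: "(\<lambda>(s, t). m s t) \<in> borel_measurable (S \<Otimes>\<^sub>M S)"
    and m_act: "\<And>g s t. s \<in> space S \<Longrightarrow> t \<in> space S \<Longrightarrow> m (act g s) (act g t) = m s t"
  shows "kernel_integral (\<lambda>s t. orbit_integral v t / orbit_integral v s * w s * m s t) =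
    kernel_integral (\<lambda>s t. w t * m s t)"
proof -
  have exchange: "kernel_integral (\<lambda>s t. orbit_integral a t * (b s / orbit_integral v s) * m s t) =
      kernel_integral (\<lambda>s t. a t * (orbit_integral b s / orbit_integral v s) * m s t)"
    if "a \<in> borel_measurable S" "b \<in> borel_measurable S" for a b
    by (rule kernel_integral_orbit_exchange) (fact v v_pos v_fin that m m_act)+
  obtain c where w_v: "\<And>s. s \<in> space S \<Longrightarrow> orbit_integral w s = c * orbit_integral v s"
    by (rule orbit_ratio_constant[OF v w _ _ Orb ratio]) (use v_pos v_fin in blast)+
  have v_cancel: "x * orbit_integral v s / orbit_integral v s = x" if "s \<in> space S" for x s
    using v_pos[OF that] v_fin[OF that] by (simp add: mult_divide_eq_ennreal)
  have v_self: "F (orbit_integral v s / orbit_integral v s) = F 1" if "s \<in> space S" for F :: "ennreal \<Rightarrow> ennreal" and s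
    using v_cancel[OF that, of 1] by simp
  have "kernel_integral (\<lambda>s t. orbit_integral v t / orbit_integral v s * w s * m s t) =
      kernel_integral (\<lambda>s t. orbit_integral v t * (w s / orbit_integral v s) * m s t)"
    by (intro kernel_integral_cong) (simp add: divide_ennreal_def ac_simps)
  also have "\<dots> = kernel_integral (\<lambda>s t. v t * (orbit_integral w s / orbit_integral v s) * m s t)"
    by (rule exchange[OF v w])
  also have "\<dots> = kernel_integral (\<lambda>s t. c * (v t * m s t))"
    by (intro kernel_integral_cong) (simp add: w_v v_cancel ac_simps)
  also have "\<dots> = c * kernel_integral (\<lambda>s t. v t * (orbit_integral v s / orbit_integral v s) * m s t)"
    by (subst kernel_integral_cmult, measurable)
      (intro arg_cong[where f = "\<lambda>x. c * x"] kernel_integral_cong, simp add: v_self)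
  also have "\<dots> = c * kernel_integral (\<lambda>s t. orbit_integral v t * (v s / orbit_integral v s) * m s t)"
    by (simp only: exchange[OF v v])
  also have "\<dots> = kernel_integral (\<lambda>s t. orbit_integral w t * (v s / orbit_integral v s) * m s t)"
    by (subst kernel_integral_cmult[symmetric], measurable)
      (intro kernel_integral_cong, simp add: w_v ac_simps)
  also have "\<dots> = kernel_integral (\<lambda>s t. w t * (orbit_integral v s / orbit_integral v s) * m s t)"
    by (rule exchange[OF w v])
  also have "\<dots> = kernel_integral (\<lambda>s t. w t * m s t)"
    by (intro kernel_integral_cong) (simp add: v_self)
  finally show ?thesis .
qed

end

theorem proposition6p7:
  fixes G :: "('g::{second_countable_topology,t2_space}, 'b) monoid_scheme"
    and lam :: "'g measure" and S :: "'s measure" and act :: "'g \<Rightarrow> 's \<Rightarrow> 's" and Orb :: "'s set"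
    and mu nu :: "'s measure" and \<gamma> \<delta> :: "'s \<Rightarrow> 's measure"
    and v w :: "'s \<Rightarrow> ennreal" and m :: "'s \<Rightarrow> 's \<Rightarrow> ennreal"
  assumes G: "lcsc_topological_group G"
    and haar: "left_haar_measure G lam"
    and S: "borel_space S"
    and act: "measurable_action G S act"
    and proper: "proper_action lam S act"
    and O: "orbit_representatives S act Orb"
    and mu: "invariant_measure S act mu" "sigma_finite_measure mu"
    and nu: "invariant_measure S act nu" "sigma_finite_measure nu"
    and \<gamma>: "invariant_kernel S act \<gamma>"
    and \<delta>: "invariant_kernel S act \<delta>"
    and balance: "\<And>C. C \<in> sets (S \<Otimes>\<^sub>M S) \<Longrightarrow>
        (\<integral>\<^sup>+ s. (\<integral>\<^sup>+ t. indicator C (s, t) \<partial>\<gamma> s) \<partial>mu) =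
        (\<integral>\<^sup>+ t. (\<integral>\<^sup>+ s. indicator C (s, t) \<partial>\<delta> t) \<partial>nu)"
    and v: "v \<in> borel_measurable S"
    and w: "w \<in> borel_measurable S"
    and v_pos: "\<And>s. s \<in> space S \<Longrightarrow> 0 < (\<integral>\<^sup>+ x. v x \<partial>orbit_measure lam S act s)
                   \<and> (\<integral>\<^sup>+ x. v x \<partial>orbit_measure lam S act s) < \<infinity>"
    and w_pos: "\<And>s. s \<in> space S \<Longrightarrow> 0 < (\<integral>\<^sup>+ x. w x \<partial>orbit_measure lam S act s)
                   \<and> (\<integral>\<^sup>+ x. w x \<partial>orbit_measure lam S act s) < \<infinity>"
    and ratio: "\<And>b b'. b \<in> Orb \<Longrightarrow> b' \<in> Orb \<Longrightarrow>
        (\<integral>\<^sup>+ x. w x \<partial>orbit_measure lam S act b) / (\<integral>\<^sup>+ x. v x \<partial>orbit_measure lam S act b) =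
        (\<integral>\<^sup>+ x. w x \<partial>orbit_measure lam S act b') / (\<integral>\<^sup>+ x. v x \<partial>orbit_measure lam S act b')"
    and m_meas: "(\<lambda>(s, t). m s t) \<in> borel_measurable (S \<Otimes>\<^sub>M S)"
    and m_inv: "\<And>g s t. s \<in> space S \<Longrightarrow> t \<in> space S \<Longrightarrow> m (act g s) (act g t) = m s t"
  shows "(\<integral>\<^sup>+ s. (\<integral>\<^sup>+ t. ((\<integral>\<^sup>+ x. v x \<partial>orbit_measure lam S act t) / (\<integral>\<^sup>+ x. v x \<partial>orbit_measure lam S act s))
              * w s * m s t \<partial>\<gamma> s) \<partial>mu) =
         (\<integral>\<^sup>+ t. (\<integral>\<^sup>+ s. w t * m s t \<partial>\<delta> t) \<partial>nu)"
proof -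
  interpret invariant_kernel_action G lam S act mu \<gamma>
    using G haar act mu \<gamma>
    by (simp add: invariant_kernel_action_def invariant_kernel_action_axioms_def haar_group_action_def
        haar_group_action_axioms_def lcsc_haar_group_def)
  note orbit = nn_integral_orbit_measure and [measurable] = v w m_meas
  have w_m: "(\<lambda>(s, t). w t * m s t) \<in> borel_measurable (S \<Otimes>\<^sub>M S)"
    by measurable
  have Orb_space: "Orb \<subseteq> space S"
    using O sets.sets_into_space unfolding orbit_representatives_def by blast
  have "(\<integral>\<^sup>+ s. (\<integral>\<^sup>+ t. ((\<integral>\<^sup>+ x. v x \<partial>orbit_measure lam S act t) / (\<integral>\<^sup>+ x. v x \<partial>orbit_measure lam S act s))
              * w s * m s t \<partial>\<gamma> s) \<partial>mu) =
      kernel_integral (\<lambda>s t. orbit_integral v t / orbit_integral v s * w s * m s t)"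
    unfolding kernel_integral_def by (intro nn_integral_kernel_cong[OF sets_mu gamma_kernel]) (simp add: orbit)
  also have "\<dots> = kernel_integral (\<lambda>s t. w t * m s t)"
  proof (rule kernel_integral_orbit_ratio[OF v w _ _ O _ m_meas])
    show "0 < orbit_integral v s" "orbit_integral v s < \<infinity>" if "s \<in> space S" for s
      using v_pos[OF that] orbit[OF v that] by simp_all
    show "orbit_integral w b / orbit_integral v b = orbit_integral w b' / orbit_integral v b'"
      if "b \<in> Orb" "b' \<in> Orb" for b b'
      using ratio[OF that] that Orb_space by (simp add: subset_iff orbit)
  qed (rule m_inv)
  also have "\<dots> = (\<integral>\<^sup>+ t. (\<integral>\<^sup>+ s. w t * m s t \<partial>\<delta> t) \<partial>nu)"
    unfolding kernel_integral_def
    using nn_integral_kernel_balance[OF sets_mu sets_invariant_measure[OF nu(1)] gamma_kernel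
        invariant_kernel_sigma_finite_kernel[OF \<delta>] balance w_m]
    by (simp only: case_prod_conv)
  finally show ?thesis .
qed

end
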